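(* Consider the networked $SIRS$-$V_o$ system described in the context, and assume the disease transmission matrix $B$ is irreducible (strongly connected graph) and symmetric, $B=B^\top$. Then $$v_c=1-\frac{1}{\rho(\widetilde G^{-1})\rho(B)}$$ is well defined and is a target vaccination criterion: for every trajectory of the system and every $T\ge 0$ such that $v_i(t)>v_c$ for all $i\in[n]$ and all $t\ge T$, the infection subsystem $\dot x=\widetilde S(t)Bx-\widetilde Gx$ (with $\widetilde S(t)=\mathrm{diag}(s(t))$) is locally asymptotically stable around $x=0_n$ for all $t\ge T$.
   Context: $\rho(M)$ is the spectral radius. There are $n$ nodes. All parameters are real and nonnegative: $a_{ij},\beta_{ij},\omega_i,\delta_i,\eta^{\min}_{ij},\Delta\eta_{ij}$, and $\gamma_i>0$. Let $A=[a_{ij}]$, $B=[\beta_{ij}]$, $H_{\min}=[\eta^{\min}_{ij}]$, $\Delta H=[\Delta\eta_{ij}]$; for a square matrix $M$, $k_i[M]=\sum_jM_{ij}$, $\widetilde K[M]=\mathrm{diag}(k_i[M])$, $L[M]=\widetilde K[M]-M$; $\widetilde G=\mathrm{diag}(\gamma_i)$, $\widetilde W=\mathrm{diag}(\omega_i)$, $\widetilde D=\mathrm{diag}(\delta_i)$, $H(o)=\mathrm{diag}(o)\Delta H+H_{\min}$. State $(o,s,x,r,v)$ with $\widetilde S=\mathrm{diag}(s)$, $\widetilde R=\mathrm{diag}(r)$, dynamics (with a media input $m(t)\in[0,\infty)^n$, $\widetilde M=\mathrm{diag}(m)$, possibly $m\equiv0$) $\dot o=A(x-o)-2L[A]o+\widetilde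 M(1_n-o)$, $\dot s=\widetilde Dv-\widetilde S(Bx+H(o)v)+\widetilde Wr$, $\dot x=\widetilde SBx-\widetilde Gx$, $\dot r=\widetilde Gx-\widetilde Wr-\widetilde RH(o)v$, $\dot v=(\widetilde S+\widetilde R)H(o)v-\widetilde Dv$, with initial conditions satisfying $o_i,s_i,x_i,r_i,v_i\in[0,1]$, $s_i+x_i+r_i+v_i=1$ (preserved in time). The opinion, disease transmission and strategy-imitation graphs (adjacency matrices $A$, $B$, $H_{\min}$) are strongly connected. *)

theory Defs
  imports "HOL-Analysis.Analysis"
begin

definition diagm :: "real^'n \<Rightarrow> real^'n^'n" where
  "diagm d = (\<chi> i j. if i = j then d $ i else 0)"

definition kdeg :: "real^'n^'n \<Rightarrow> real^'n" where
  "kdeg M = (\<chi> i. \<Sum>j\<in>UNIV. M $ i $ j)"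

definition lapl :: "real^'n^'n \<Rightarrow> real^'n^'n" where
  "lapl M = diagm (kdeg M) - M"

definition Hmat :: "real^'n^'n \<Rightarrow> real^'n^'n \<Rightarrow> real^'n \<Rightarrow> real^'n^'n" where
  "Hmat Hmin dH o' = diagm o' ** dH + Hmin"

text \<open>Irreducibility / strong connectivity of the weighted digraph with adjacency matrix M:
  every node reaches every node by a nonempty path of edges with nonzero weight
  (Horn and Johnson convention; a 1x1 zero matrix is reducible).\<close>
definition irreducible_mat :: "real^'n^'n \<Rightarrow> bool" where
  "irreducible_mat M \<longleftrightarrow> (\<forall>i j. (i, j) \<in> {(a, b). M $ a $ b \<noteq> 0}\<^sup>+)"

definition nonneg_mat :: "real^'n^'n \<Rightarrow> bool" where
  "nonneg_mat M \<longleftrightarrow> (\<forall>i j. 0 \<le> M $ i $ j)"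

definition cmat :: "real^'n^'n \<Rightarrow> complex^'n^'n" where
  "cmat M = (\<chi> i j. complex_of_real (M $ i $ j))"

definition eigenvalues :: "real^'n^'n \<Rightarrow> complex set" where
  "eigenvalues M = {c. \<exists>u::complex^'n. u \<noteq> 0 \<and> cmat M *v u = c *s u}"

definition spec_rad :: "real^'n^'n \<Rightarrow> real" where
  "spec_rad M = Max (cmod ` eigenvalues M)"

definition is_solution :: "('a::real_normed_vector \<Rightarrow> 'a) \<Rightarrow> (real \<Rightarrow> 'a) \<Rightarrow> bool" where
  "is_solution f \<phi> \<longleftrightarrow> (\<forall>t\<ge>0. (\<phi> has_vector_derivative f (\<phi> t)) (at t within {0..}))"

definition loc_asym_stable :: "('a::real_normed_vector \<Rightarrow> 'a) \<Rightarrow> 'a \<Rightarrow> bool" where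
  "loc_asym_stable f x0 \<longleftrightarrow>
     (\<forall>\<epsilon>>0. \<exists>\<delta>>0. \<forall>\<phi>. is_solution f \<phi> \<and> dist (\<phi> 0) x0 < \<delta> \<longrightarrow> (\<forall>t\<ge>0. dist (\<phi> t) x0 < \<epsilon>))
   \<and> (\<exists>\<delta>>0. \<forall>\<phi>. is_solution f \<phi> \<and> dist (\<phi> 0) x0 < \<delta> \<longrightarrow> (\<phi> \<longlongrightarrow> x0) at_top)"

definition sirsvo_traj ::
  "real^'n^'n \<Rightarrow> real^'n^'n \<Rightarrow> real^'n^'n \<Rightarrow> real^'n^'n \<Rightarrow> real^'n \<Rightarrow> real^'n \<Rightarrow> real^'n \<Rightarrow>
   (real \<Rightarrow> real^'n) \<Rightarrow> (real \<Rightarrow> real^'n) \<Rightarrow> (real \<Rightarrow> real^'n) \<Rightarrow> (real \<Rightarrow> real^'n) \<Rightarrow>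
   (real \<Rightarrow> real^'n) \<Rightarrow> (real \<Rightarrow> real^'n) \<Rightarrow> bool" where
  "sirsvo_traj A B Hmin dH \<omega> \<delta> \<gamma> m op s x r v \<longleftrightarrow>
     (\<forall>t\<ge>0. \<forall>i. 0 \<le> m t $ i)
   \<and> (\<forall>t\<ge>0. \<forall>i. 0 \<le> op t $ i \<and> op t $ i \<le> 1 \<and> 0 \<le> s t $ i \<and> s t $ i \<le> 1
        \<and> 0 \<le> x t $ i \<and> x t $ i \<le> 1 \<and> 0 \<le> r t $ i \<and> r t $ i \<le> 1
        \<and> 0 \<le> v t $ i \<and> v t $ i \<le> 1 \<and> s t $ i + x t $ i + r t $ i + v t $ i = 1)
   \<and> (\<forall>t\<ge>0.
        (op has_vector_derivative
           (A *v (x t - op t) - (2::real) *\<^sub>R (lapl A *v op t) + diagm (m t) *v (vec 1 - op t)))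
           (at t within {0..})
      \<and> (s has_vector_derivative
           (diagm \<delta> *v v t - diagm (s t) *v (B *v x t + Hmat Hmin dH (op t) *v v t) + diagm \<omega> *v r t))
           (at t within {0..})
      \<and> (x has_vector_derivative (diagm (s t) ** B *v x t - diagm \<gamma> *v x t))
           (at t within {0..})
      \<and> (r has_vector_derivative
           (diagm \<gamma> *v x t - diagm \<omega> *v r t - diagm (r t) *v (Hmat Hmin dH (op t) *v v t)))
           (at t within {0..})
      \<and> (v has_vector_derivative
           ((diagm (s t) + diagm (r t)) *v (Hmat Hmin dH (op t) *v v t) - diagm \<delta> *v v t))
           (at t within {0..}))"

end

(*
  Once v_i > v_c, the simplex invariant gives s_i = 1 - x_i - r_i - v_i < 1 - v_c
  = 1 / (rho(G^-1) rho(B)), and rho(G^-1) >= 1 / gamma_j for every j, so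
  s_i rho(B) < gamma_j for all i, j.  For the frozen-time linear system
  y' = (S B - G) y this yields y . y' <= |S y| |B y| - (min gamma) |y|^2 <= -kappa |y|^2
  with kappa > 0, since |B y| <= rho(B) |y| for symmetric B; so |y|^2 decays
  exponentially.  The norm bound comes from the variational principle: the maximum mu
  of the Rayleigh quotient of B^2 is attained at an eigenvector y, and then
  (B - sqrt mu)(B + sqrt mu) y = 0 makes sqrt mu or -sqrt mu an eigenvalue of B.
  The spectrum is finite (so that rho is a maximum) because det (M - c I) is a
  nonzero polynomial in c.
*)

theory Submission
  imports Defs "HOL-Computational_Algebra.Polynomial"
begin

section \<open>Finiteness of the spectrum\<close>

definition polynomial_fun :: "('a::comm_ring_1 \<Rightarrow> 'a) \<Rightarrow> bool" where
  "polynomial_fun f \<longleftrightarrow> (\<exists>p. \<forall>c. f c = poly p c)"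

lemma polynomial_fun_const: "polynomial_fun (\<lambda>c. a)"
  unfolding polynomial_fun_def by (intro exI[of _ "[:a:]"]) simp

lemma polynomial_fun_id: "polynomial_fun (\<lambda>c. c)"
  unfolding polynomial_fun_def by (intro exI[of _ "[:0, 1:]"]) simp

lemma polynomial_fun_add:
  "polynomial_fun f \<Longrightarrow> polynomial_fun g \<Longrightarrow> polynomial_fun (\<lambda>c. f c + g c)"
  unfolding polynomial_fun_def by (metis poly_add)

lemma polynomial_fun_diff:
  "polynomial_fun f \<Longrightarrow> polynomial_fun g \<Longrightarrow> polynomial_fun (\<lambda>c. f c - g c)"
  unfolding polynomial_fun_def by (metis poly_diff)

lemma polynomial_fun_mult:
  "polynomial_fun f \<Longrightarrow> polynomial_fun g \<Longrightarrow> polynomial_fun (\<lambda>c. f c * g c)"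
  unfolding polynomial_fun_def by (metis poly_mult)

lemma polynomial_fun_sum:
  "(\<And>x. x \<in> S \<Longrightarrow> polynomial_fun (f x)) \<Longrightarrow> polynomial_fun (\<lambda>c. \<Sum>x\<in>S. f x c)"
  by (induction S rule: infinite_finite_induct) (simp_all add: polynomial_fun_const polynomial_fun_add)

lemma polynomial_fun_prod:
  "(\<And>x. x \<in> S \<Longrightarrow> polynomial_fun (f x)) \<Longrightarrow> polynomial_fun (\<lambda>c. \<Prod>x\<in>S. f x c)"
  by (induction S rule: infinite_finite_induct) (simp_all add: polynomial_fun_const polynomial_fun_mult)

lemma polynomial_fun_det_minus_mat:
  fixes A :: "'a::comm_ring_1^'n^'n"
  shows "polynomial_fun (\<lambda>c. det (A - mat c))"
proof -
  have entry: "polynomial_fun (\<lambda>c. (A - mat c) $ i $ j)" for i j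
    by (cases "i = j") (simp_all add: mat_def polynomial_fun_diff polynomial_fun_const polynomial_fun_id)
  show ?thesis
    unfolding det_def
    by (rule polynomial_fun_sum, rule polynomial_fun_mult[OF polynomial_fun_const],
        rule polynomial_fun_prod, rule entry)
qed

lemma polynomial_fun_finite_roots:
  fixes f :: "'a::idom \<Rightarrow> 'a"
  assumes "polynomial_fun f" and "f c \<noteq> 0"
  shows "finite {c. f c = 0}"
proof -
  obtain p where p: "\<And>c. f c = poly p c"
    using assms(1) unfolding polynomial_fun_def by blast
  then have "p \<noteq> 0"
    using assms(2) by auto
  then show ?thesis
    using poly_roots_finite[of p] p by simp
qed

lemma matrix_vector_mult_minus_mat:
  fixes A :: "'a::comm_ring_1^'n^'n"
  shows "(A - mat c) *v u = A *v u - c *s u"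
  by (simp add: vec_eq_iff mat_def matrix_vector_mult_def sum_subtractf left_diff_distrib
      if_distrib[of "\<lambda>x. x * _"] cong: if_cong)

lemma eigenvalues_iff_det: "c \<in> eigenvalues M \<longleftrightarrow> det (cmat M - mat c) = 0"
proof -
  have "det (cmat M - mat c) \<noteq> 0 \<longleftrightarrow> inj ((*v) (cmat M - mat c))"
    using det_nz_iff_inj_gen[OF matrix_vector_mul_linear_gen] by simp
  also have "\<dots> \<longleftrightarrow> c \<notin> eigenvalues M"
    by (auto simp: vec.inj_iff_eq_0 eigenvalues_def matrix_vector_mult_minus_mat)
  finally show ?thesis by blast
qed

lemma norm_vector_smult:
  fixes u :: "'a::real_normed_div_algebra^'n"
  shows "norm (c *s u) = norm c * norm u"
  unfolding norm_vec_def by (simp add: norm_mult L2_set_right_distrib)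

lemma eigenvalues_bounded: "\<exists>K. \<forall>c\<in>eigenvalues M. cmod c \<le> K"
proof -
  obtain K where K: "\<And>u. norm (cmat M *v u) \<le> norm u * K"
    using bounded_linear.bounded[OF matrix_vector_mul_bounded_linear] by blast
  have "cmod c \<le> K" if c: "c \<in> eigenvalues M" for c
  proof -
    obtain u where "u \<noteq> 0" "cmat M *v u = c *s u"
      using c unfolding eigenvalues_def by blast
    then have "cmod c * norm u \<le> K * norm u" and "0 < norm u"
      using K[of u] by (simp_all add: norm_vector_smult mult.commute)
    then show ?thesis by simp
  qed
  then show ?thesis by blast
qed

lemma finite_eigenvalues: "finite (eigenvalues M)"
proof -
  obtain K where K: "\<forall>c\<in>eigenvalues M. cmod c \<le> K"
    using eigenvalues_bounded by blast
  have "complex_of_real (\<bar>K\<bar> + 1) \<notin> eigenvalues M"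
    using K by force
  then have "finite {c. det (cmat M - mat c) = 0}"
    by (intro polynomial_fun_finite_roots polynomial_fun_det_minus_mat)
       (auto simp: eigenvalues_iff_det)
  moreover have "eigenvalues M = {c. det (cmat M - mat c) = 0}"
    using eigenvalues_iff_det by blast
  ultimately show ?thesis by simp
qed

lemma norm_le_spec_rad: "c \<in> eigenvalues M \<Longrightarrow> cmod c \<le> spec_rad M"
  unfolding spec_rad_def using finite_eigenvalues by (intro Max_ge) auto

lemma of_real_in_eigenvalues:
  fixes M :: "real^'n^'n"
  assumes "y \<noteq> 0" and "M *v y = \<mu> *\<^sub>R y"
  shows "complex_of_real \<mu> \<in> eigenvalues M"
proof -
  define u where "u = (\<chi> i. complex_of_real (y $ i))"
  have "cmat M *v u = (\<chi> i. complex_of_real ((M *v y) $ i))"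
    by (simp add: vec_eq_iff cmat_def u_def matrix_vector_mult_def)
  also have "\<dots> = complex_of_real \<mu> *s u"
    using assms(2) by (simp add: vec_eq_iff u_def)
  finally have "cmat M *v u = complex_of_real \<mu> *s u" .
  moreover have "u \<noteq> 0"
    using assms(1) by (auto simp: u_def vec_eq_iff)
  ultimately show ?thesis unfolding eigenvalues_def by blast
qed

section \<open>Symmetric matrices\<close>

lemma inner_matrix_vector_mult_symmetric:
  fixes B :: "real^'n^'n"
  assumes "transpose B = B"
  shows "x \<bullet> (B *v y) = (B *v x) \<bullet> y"
  by (metis assms dot_lmul_matrix transpose_matrix_vector)

lemma quadratic_nonneg_imp_linear_coeff_zero:
  fixes a b :: real
  assumes "\<And>t. 0 \<le> t * a + t\<^sup>2 * b"
  shows "a = 0"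
proof -
  have "0 \<le> b"
    using assms[of 1] assms[of "-1"] by simp
  define t where "t = - a / (b + 1)"
  have "t * (b + 1) = - a"
    using \<open>0 \<le> b\<close> by (simp add: t_def)
  have "(b + 1)\<^sup>2 * (t * a + t\<^sup>2 * b) = (t * (b + 1)) * a * (b + 1) + (t * (b + 1))\<^sup>2 * b"
    by (simp add: algebra_simps power2_eq_square)
  also have "\<dots> = - a\<^sup>2"
    unfolding \<open>t * (b + 1) = - a\<close> by (simp add: algebra_simps power2_eq_square)
  finally have "a\<^sup>2 \<le> 0"
    using assms[of t] by (metis neg_0_le_iff_le zero_le_mult_iff zero_le_power2)
  then show ?thesis
    by simp
qed

lemma rayleigh_max_imp_eigenvector:
  fixes B :: "real^'n^'n"
  assumes sym: "transpose B = B"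
    and le: "\<And>z. z \<bullet> (B *v z) \<le> \<mu> * (z \<bullet> z)"
    and eq: "y \<bullet> (B *v y) = \<mu> * (y \<bullet> y)"
  shows "B *v y = \<mu> *\<^sub>R y"
proof -
  \<comment> \<open>The form \<open>\<mu> |z|^2 - z \<bullet> B z\<close> is nonnegative and vanishes at \<open>y\<close>, so along \<open>y + t d\<close>
     its first-order term \<open>2 t |d|^2\<close> must vanish.\<close>
  define d where "d = \<mu> *\<^sub>R y - B *v y"
  have "0 \<le> t * (2 * (d \<bullet> d)) + t\<^sup>2 * (\<mu> * (d \<bullet> d) - d \<bullet> (B *v d))" for t
  proof -
    have "d \<bullet> (B *v y) = y \<bullet> (B *v d)"
      using inner_matrix_vector_mult_symmetric[OF sym, of y d] by (simp add: inner_commute)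
    then have "\<mu> * ((y + t *\<^sub>R d) \<bullet> (y + t *\<^sub>R d)) - (y + t *\<^sub>R d) \<bullet> (B *v (y + t *\<^sub>R d))
        = t * (2 * (d \<bullet> d)) + t\<^sup>2 * (\<mu> * (d \<bullet> d) - d \<bullet> (B *v d))"
      using eq
      by (simp add: d_def matrix_vector_right_distrib matrix_vector_mult_scaleR inner_add_left
          inner_add_right inner_diff_left inner_diff_right inner_commute power2_eq_square algebra_simps)
    then show ?thesis
      using le[of "y + t *\<^sub>R d"] by linarith
  qed
  then have "d \<bullet> d = 0"
    using quadratic_nonneg_imp_linear_coeff_zero by fastforce
  then show ?thesis
    by (simp add: d_def)
qed

lemma symmetric_rayleigh_max_eigenpair:
  fixes B :: "real^'n^'n"
  assumes sym: "transpose B = B"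
  obtains \<mu> y where "y \<noteq> 0" and "B *v y = \<mu> *\<^sub>R y" and "\<And>z. z \<bullet> (B *v z) \<le> \<mu> * (z \<bullet> z)"
proof -
  define q where "q z = z \<bullet> (B *v z)" for z :: "real^'n"
  have "continuous_on (sphere 0 1) q"
    unfolding q_def by (intro continuous_intros linear_continuous_on matrix_vector_mul_linear)
  moreover have "sphere (0::real^'n) 1 \<noteq> {}"
    by simp
  ultimately obtain y where y: "y \<in> sphere 0 1" and y_max: "\<And>z. z \<in> sphere 0 1 \<Longrightarrow> q z \<le> q y"
    using continuous_attains_sup[OF compact_sphere] by blast
  define \<mu> where "\<mu> = q y"
  have "y \<bullet> y = 1"
    using y by (simp add: dot_square_norm)
  have le: "z \<bullet> (B *v z) \<le> \<mu> * (z \<bullet> z)" for z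
  proof (cases "z = 0")
    case False
    have "q ((1 / norm z) *\<^sub>R z) \<le> \<mu>"
      using False unfolding \<mu>_def by (intro y_max) simp
    then show ?thesis
      using False by (simp add: q_def matrix_vector_mult_scaleR dot_square_norm field_simps power2_eq_square)
  qed simp
  have "y \<bullet> (B *v y) = \<mu> * (y \<bullet> y)"
    using \<open>y \<bullet> y = 1\<close> by (simp add: \<mu>_def q_def)
  then have "B *v y = \<mu> *\<^sub>R y"
    using rayleigh_max_imp_eigenvector[OF sym le] by blast
  moreover have "y \<noteq> 0"
    using \<open>y \<bullet> y = 1\<close> by auto
  ultimately show ?thesis
    using that le by blast
qed

lemma eigenvalue_of_square_le_spec_rad:
  fixes B :: "real^'n^'n"
  assumes "y \<noteq> 0" and "B *v (B *v y) = r\<^sup>2 *\<^sub>R y" and "0 \<le> r"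
  shows "r \<le> spec_rad B"
  \<comment> \<open>\<open>(B - r)(B + r) y = 0\<close>: either \<open>-r\<close> is an eigenvalue, or \<open>B y + r y\<close> is an eigenvector for \<open>r\<close>.\<close>
proof (cases "B *v y + r *\<^sub>R y = 0")
  case True
  then have "B *v y = (- r) *\<^sub>R y"
    by (simp add: eq_neg_iff_add_eq_0)
  then have "complex_of_real (- r) \<in> eigenvalues B"
    by (rule of_real_in_eigenvalues[OF assms(1)])
  then show ?thesis
    using norm_le_spec_rad by fastforce
next
  case False
  have "B *v (B *v y + r *\<^sub>R y) = r *\<^sub>R (B *v y + r *\<^sub>R y)"
    using assms(2) by (simp add: matrix_vector_right_distrib matrix_vector_mult_scaleR
        scaleR_add_right power2_eq_square)
  then have "complex_of_real r \<in> eigenvalues B"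
    by (rule of_real_in_eigenvalues[OF False])
  then show ?thesis
    using norm_le_spec_rad assms(3) by fastforce
qed

lemma norm_matrix_vector_mult_le_spec_rad:
  fixes B :: "real^'n^'n"
  assumes sym: "transpose B = B"
  shows "norm (B *v z) \<le> spec_rad B * norm z"
proof -
  have sq: "x \<bullet> ((B ** B) *v x) = (norm (B *v x))\<^sup>2" for x
    using inner_matrix_vector_mult_symmetric[OF sym]
    by (simp add: matrix_vector_mul_assoc[symmetric] power2_norm_eq_inner)
  have "transpose (B ** B) = B ** B"
    using sym by (simp add: matrix_transpose_mul)
  with symmetric_rayleigh_max_eigenpair obtain \<mu> y where y: "y \<noteq> 0" "(B ** B) *v y = \<mu> *\<^sub>R y"
    and le: "\<And>x. x \<bullet> ((B ** B) *v x) \<le> \<mu> * (x \<bullet> x)"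
    by blast
  have "0 \<le> \<mu> * (y \<bullet> y)"
    using y(2) sq[of y] by (metis inner_scaleR_right zero_le_power2)
  moreover have "0 < y \<bullet> y"
    using y(1) by simp
  ultimately have "0 \<le> \<mu>"
    by (simp add: zero_le_mult_iff)
  have "sqrt \<mu> \<le> spec_rad B"
    using \<open>0 \<le> \<mu>\<close> y by (intro eigenvalue_of_square_le_spec_rad[OF y(1)])
       (simp_all add: matrix_vector_mul_assoc)
  have "(norm (B *v z))\<^sup>2 \<le> (sqrt \<mu> * norm z)\<^sup>2"
    using le[of z] sq[of z] \<open>0 \<le> \<mu>\<close> by (simp add: power_mult_distrib power2_norm_eq_inner)
  then have "norm (B *v z) \<le> sqrt \<mu> * norm z"
    by (rule power2_le_imp_le) (simp add: \<open>0 \<le> \<mu>\<close>)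
  also have "\<dots> \<le> spec_rad B * norm z"
    using \<open>sqrt \<mu> \<le> spec_rad B\<close> by (simp add: mult_right_mono)
  finally show ?thesis .
qed

lemma spec_rad_pos_if_symmetric:
  fixes B :: "real^'n^'n"
  assumes "transpose B = B" and "B \<noteq> 0"
  shows "0 < spec_rad B"
proof -
  obtain i j where "B $ i $ j \<noteq> 0"
    using assms(2) by (auto simp: vec_eq_iff)
  moreover have "(B *v axis j 1) $ i = B $ i $ j"
    by (simp add: matrix_vector_mult_def axis_def if_distrib[of "\<lambda>x. _ * x"] cong: if_cong)
  ultimately have "B *v axis j 1 \<noteq> 0"
    by (metis zero_index)
  then have "0 < norm (B *v axis j 1)"
    by simp
  also have "\<dots> \<le> spec_rad B * norm (axis j (1::real))"
    by (rule norm_matrix_vector_mult_le_spec_rad[OF assms(1)])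
  finally show ?thesis
    by (simp add: zero_less_mult_iff)
qed

lemma transpose_diagm: "transpose (diagm d) = diagm d"
  by (simp add: transpose_def diagm_def vec_eq_iff)

lemma matrix_vector_mult_diagm: "diagm d *v y = (\<chi> i. d $ i * y $ i)"
  by (simp add: diagm_def matrix_vector_mult_def vec_eq_iff if_distrib[of "\<lambda>x. x * _"] cong: if_cong)

lemma diagm_mult_diagm: "diagm a ** diagm b = diagm (\<chi> i. a $ i * b $ i)"
  by (simp add: diagm_def matrix_matrix_mult_def vec_eq_iff if_distrib[of "\<lambda>x. x * _"] cong: if_cong)

lemma matrix_inv_eqI:
  fixes A B :: "'a::semiring_1^'n^'n"
  assumes "A ** B = mat 1" and "B ** A = mat 1"
  shows "matrix_inv A = B"
proof -
  have "A ** matrix_inv A = mat 1 \<and> matrix_inv A ** A = mat 1"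
    unfolding matrix_inv_def using assms by (rule someI[of _ B, OF conjI])
  then have "matrix_inv A = (B ** A) ** matrix_inv A"
    using assms(2) by (simp add: matrix_mul_lid)
  also have "\<dots> = B"
    using \<open>A ** matrix_inv A = mat 1 \<and> _\<close> by (simp add: matrix_mul_assoc[symmetric] matrix_mul_rid)
  finally show ?thesis .
qed

lemma matrix_inv_diagm:
  assumes "\<forall>i. d $ i \<noteq> 0"
  shows "matrix_inv (diagm d) = diagm (\<chi> i. inverse (d $ i))"
proof -
  have "diagm (\<chi> i. 1) = (mat 1 :: real^'n^'n)"
    by (simp add: diagm_def mat_def vec_eq_iff)
  then show ?thesis
    using assms by (intro matrix_inv_eqI) (simp_all add: diagm_mult_diagm)
qed

lemma diagm_eigenvalue: "complex_of_real (d $ k) \<in> eigenvalues (diagm d)"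
proof (rule of_real_in_eigenvalues)
  show "axis k (1::real) \<noteq> 0"
    by (simp add: axis_eq_0_iff)
  show "diagm d *v axis k 1 = d $ k *\<^sub>R axis k 1"
    by (simp add: matrix_vector_mult_diagm vec_eq_iff axis_def)
qed

lemma spec_rad_matrix_inv_diagm_ge:
  assumes "\<forall>i. 0 < d $ i"
  shows "1 / d $ k \<le> spec_rad (matrix_inv (diagm d))"
proof -
  have "matrix_inv (diagm d) = diagm (\<chi> i. inverse (d $ i))"
    using assms by (intro matrix_inv_diagm) (simp add: less_imp_neq[symmetric])
  then show ?thesis
    using norm_le_spec_rad[OF diagm_eigenvalue[of "\<chi> i. inverse (d $ i)" k]] assms[rule_format, of k]
    by (simp add: norm_divide abs_of_pos inverse_eq_divide)
qed

lemma norm_diagm_mult_le: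
  assumes "\<And>i. \<bar>d $ i\<bar> \<le> c"
  shows "norm (diagm d *v y) \<le> c * norm y"
proof -
  have "norm (diagm d *v y) = L2_set (\<lambda>i. \<bar>d $ i\<bar> * \<bar>y $ i\<bar>) UNIV"
    by (simp add: norm_vec_def matrix_vector_mult_diagm abs_mult)
  also have "\<dots> \<le> L2_set (\<lambda>i. c * \<bar>y $ i\<bar>) UNIV"
    using assms by (intro L2_set_mono mult_right_mono) auto
  also have "\<dots> = c * norm y"
    using assms[of undefined] by (simp add: norm_vec_def L2_set_right_distrib)
  finally show ?thesis .
qed

lemma inner_diagm_ge:
  assumes "\<And>i. c \<le> d $ i"
  shows "c * (y \<bullet> y) \<le> y \<bullet> (diagm d *v y)"
proof -
  have "c * (y \<bullet> y) = (\<Sum>i\<in>UNIV. c * (y $ i * y $ i))"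
    by (simp add: inner_vec_def sum_distrib_left)
  also have "\<dots> \<le> (\<Sum>i\<in>UNIV. d $ i * (y $ i * y $ i))"
    using assms by (intro sum_mono mult_right_mono) auto
  also have "\<dots> = y \<bullet> (diagm d *v y)"
    by (simp add: inner_vec_def matrix_vector_mult_diagm algebra_simps)
  finally show ?thesis .
qed

section \<open>Dissipative vector fields\<close>

lemma solution_norm_le_exp:
  fixes f :: "'a::real_inner \<Rightarrow> 'a"
  assumes diss: "\<And>y. y \<bullet> f y \<le> - \<kappa> * (y \<bullet> y)"
    and sol: "is_solution f \<phi>" and "0 \<le> t"
  shows "norm (\<phi> t) \<le> exp (- \<kappa> * t) * norm (\<phi> 0)"
proof -
  define W where "W s = exp (2 * \<kappa> * s) * (\<phi> s \<bullet> \<phi> s)" for s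
  define W' where "W' s = exp (2 * \<kappa> * s) * (2 * \<kappa> * (\<phi> s \<bullet> \<phi> s) + 2 * (\<phi> s \<bullet> f (\<phi> s)))" for s
  have W_deriv: "(W has_real_derivative W' s) (at s within {0..})" if "0 \<le> s" for s
  proof -
    have \<phi>_deriv: "(\<phi> has_derivative (\<lambda>h. h *\<^sub>R f (\<phi> s))) (at s within {0..})"
      using sol that unfolding is_solution_def has_vector_derivative_def by blast
    have "((\<lambda>s. \<phi> s \<bullet> \<phi> s) has_real_derivative 2 * (\<phi> s \<bullet> f (\<phi> s))) (at s within {0..})"
      unfolding has_field_derivative_def
      by (rule has_derivative_eq_rhs[OF has_derivative_inner[OF \<phi>_deriv \<phi>_deriv]])
         (simp add: fun_eq_iff algebra_simps inner_commute)
    then show ?thesis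
      unfolding W_def W'_def by (auto intro!: derivative_eq_intros simp: algebra_simps)
  qed
  have "W t \<le> W 0"
  proof (rule DERIV_nonpos_imp_decreasing_open[OF \<open>0 \<le> t\<close>])
    fix s assume s: "0 < s" "s < t"
    then have "at s within {0..} = at s"
      by (intro at_within_interior) auto
    then have "(W has_real_derivative W' s) (at s)"
      using W_deriv[of s] s by simp
    moreover have "W' s \<le> 0"
      unfolding W'_def using diss[of "\<phi> s"] by (intro mult_nonneg_nonpos) auto
    ultimately show "\<exists>y. (W has_real_derivative y) (at s) \<and> y \<le> 0"
      by blast
  next
    have "continuous (at s within {0..}) W" if "s \<in> {0..t}" for s
      using W_deriv[of s] that DERIV_continuous by auto
    then show "continuous_on {0..t} W"
      unfolding continuous_on_eq_continuous_within
      by (meson atLeastAtMost_iff atLeast_iff continuous_within_subset subsetI)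
  qed
  have "(norm (\<phi> t))\<^sup>2 = exp (- (2 * \<kappa> * t)) * W t"
    by (simp add: W_def power2_norm_eq_inner exp_minus field_simps)
  also have "\<dots> \<le> exp (- (2 * \<kappa> * t)) * W 0"
    using \<open>W t \<le> W 0\<close> by simp
  also have "\<dots> = (exp (- \<kappa> * t) * norm (\<phi> 0))\<^sup>2"
  proof -
    have "exp (- (2 * \<kappa> * t)) = (exp (- \<kappa> * t))\<^sup>2"
      by (simp add: power2_eq_square flip: exp_add)
    then show ?thesis
      by (simp add: W_def power_mult_distrib power2_norm_eq_inner)
  qed
  finally show ?thesis
    by (rule power2_le_imp_le) simp
qed

lemma loc_asym_stable_if_dissipative:
  fixes f :: "'a::real_inner \<Rightarrow> 'a"
  assumes "0 < \<kappa>" and diss: "\<And>y. y \<bullet> f y \<le> - \<kappa> * (y \<bullet> y)"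
  shows "loc_asym_stable f 0"
proof -
  have decay: "norm (\<phi> t) \<le> exp (- \<kappa> * t) * norm (\<phi> 0)"
    if "is_solution f \<phi>" "0 \<le> t" for \<phi> t
    using diss that by (rule solution_norm_le_exp)
  have bounded: "norm (\<phi> t) \<le> norm (\<phi> 0)" if "is_solution f \<phi>" "0 \<le> t" for \<phi> t
  proof -
    have "exp (- \<kappa> * t) \<le> 1"
      using \<open>0 < \<kappa>\<close> that(2) by simp
    then show ?thesis
      using decay[OF that] by (meson mult_left_le_one_le norm_ge_zero exp_ge_zero order_trans)
  qed
  have exp_lim: "((\<lambda>t. exp (- \<kappa> * t) * c) \<longlongrightarrow> 0) at_top" for c
  proof -
    have "filterlim (\<lambda>t. \<kappa> * t) at_top at_top"
      by (rule filterlim_tendsto_pos_mult_at_top[OF tendsto_const \<open>0 < \<kappa>\<close> filterlim_ident])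
    then have "filterlim (\<lambda>t. - \<kappa> * t) at_bot at_top"
      by (simp add: filterlim_uminus_at_bot)
    then show ?thesis
      by (intro tendsto_mult_left_zero filterlim_compose[OF exp_at_bot])
  qed
  have convergent: "(\<phi> \<longlongrightarrow> 0) at_top" if "is_solution f \<phi>" for \<phi>
  proof (rule Lim_null_comparison[OF _ exp_lim])
    show "\<forall>\<^sub>F t in at_top. norm (\<phi> t) \<le> exp (- \<kappa> * t) * norm (\<phi> 0)"
      using eventually_ge_at_top[of 0] by eventually_elim (rule decay[OF that])
  qed
  show ?thesis
    unfolding loc_asym_stable_def
  proof (intro conjI allI impI)
    fix \<epsilon> :: real
    assume "0 < \<epsilon>"
    then show "\<exists>\<delta>>0. \<forall>\<phi>. is_solution f \<phi> \<and> dist (\<phi> 0) 0 < \<delta> \<longrightarrow> (\<forall>t\<ge>0. dist (\<phi> t) 0 < \<epsilon>)"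
      using bounded by (intro exI[of _ \<epsilon>]) (auto simp: dist_norm intro: le_less_trans)
  next
    show "\<exists>\<delta>>0. \<forall>\<phi>. is_solution f \<phi> \<and> dist (\<phi> 0) 0 < \<delta> \<longrightarrow> (\<phi> \<longlongrightarrow> 0) at_top"
      using convergent by (intro exI[of _ 1]) auto
  qed
qed

section \<open>The vaccination threshold\<close>

lemma loc_asym_stable_diagm_mult_symmetric:
  fixes B :: "real^'n^'n" and s \<gamma> :: "real^'n"
  assumes sym: "transpose B = B" and s_nonneg: "\<forall>i. 0 \<le> s $ i"
    and s_below: "\<forall>i j. s $ i * spec_rad B < \<gamma> $ j"
  shows "loc_asym_stable (\<lambda>y. diagm s ** B *v y - diagm \<gamma> *v y) 0"
proof -
  define \<sigma> where "\<sigma> = Max (range (\<lambda>i. s $ i))"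
  define g where "g = Min (range (\<lambda>j. \<gamma> $ j))"
  have s_le: "s $ i \<le> \<sigma>" for i
    unfolding \<sigma>_def by (rule Max_ge) auto
  have "0 \<le> \<sigma>"
    using s_nonneg s_le by (meson order_trans)
  have g_le: "g \<le> \<gamma> $ j" for j
    unfolding g_def by (rule Min_le) auto
  have "\<sigma> \<in> range (\<lambda>i. s $ i)" and "g \<in> range (\<lambda>j. \<gamma> $ j)"
    unfolding \<sigma>_def g_def by (rule Max_in Min_in; simp)+
  then have "\<sigma> * spec_rad B < g"
    using s_below by auto
  have "y \<bullet> (diagm s ** B *v y - diagm \<gamma> *v y) \<le> - (g - \<sigma> * spec_rad B) * (y \<bullet> y)" for y
  proof -
    have "y \<bullet> (diagm s ** B *v y) = (diagm s *v y) \<bullet> (B *v y)"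
      using inner_matrix_vector_mult_symmetric[OF transpose_diagm]
      by (simp flip: matrix_vector_mul_assoc)
    also have "\<dots> \<le> norm (diagm s *v y) * norm (B *v y)"
      by (rule norm_cauchy_schwarz)
    also have "\<dots> \<le> (\<sigma> * norm y) * (spec_rad B * norm y)"
      using s_nonneg s_le \<open>0 \<le> \<sigma>\<close>
      by (intro mult_mono norm_diagm_mult_le norm_matrix_vector_mult_le_spec_rad[OF sym]) auto
    also have "\<dots> = \<sigma> * spec_rad B * (y \<bullet> y)"
      by (simp add: power2_norm_eq_inner[symmetric] power2_eq_square)
    finally have "y \<bullet> (diagm s ** B *v y) \<le> \<sigma> * spec_rad B * (y \<bullet> y)" .
    moreover have "g * (y \<bullet> y) \<le> y \<bullet> (diagm \<gamma> *v y)"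
      using g_le by (rule inner_diagm_ge)
    ultimately show ?thesis
      by (simp add: inner_diff_right algebra_simps)
  qed
  with \<open>\<sigma> * spec_rad B < g\<close> show ?thesis
    by (intro loc_asym_stable_if_dissipative[of "g - \<sigma> * spec_rad B"]) auto
qed

lemma irreducible_mat_nonzero: "irreducible_mat M \<Longrightarrow> M \<noteq> 0"
  by (auto simp: irreducible_mat_def)

lemma sirsvo_traj_susceptible_less:
  assumes "sirsvo_traj A B Hmin dH \<omega> \<delta> \<gamma> m op s x r v" and "0 \<le> t" and "1 - \<theta> < v t $ i"
  shows "0 \<le> s t $ i \<and> s t $ i < \<theta>"
proof -
  have "0 \<le> s t $ i" "0 \<le> x t $ i" "0 \<le> r t $ i" "s t $ i + x t $ i + r t $ i + v t $ i = 1"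
    using assms(1,2) unfolding sirsvo_traj_def by blast+
  with assms(3) show ?thesis
    by linarith
qed

lemma mult_less_if_below_threshold:
  assumes "\<forall>i. 0 < \<gamma> $ i" and "0 < b" and "a < 1 / (spec_rad (matrix_inv (diagm \<gamma>)) * b)"
  shows "a * b < \<gamma> $ j"
proof -
  define \<rho> where "\<rho> = spec_rad (matrix_inv (diagm \<gamma>))"
  have "1 / \<gamma> $ j \<le> \<rho>" and "0 < \<gamma> $ j"
    using assms(1) unfolding \<rho>_def by (blast intro: spec_rad_matrix_inv_diagm_ge)+
  then have "0 < \<rho>"
    by (meson less_le_trans zero_less_divide_1_iff)
  have "a * b < 1 / \<rho>"
    using assms(2,3) \<open>0 < \<rho>\<close> unfolding \<rho>_def by (simp add: field_simps)
  also have "\<dots> \<le> \<gamma> $ j"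
    using \<open>1 / \<gamma> $ j \<le> \<rho>\<close> \<open>0 < \<gamma> $ j\<close> \<open>0 < \<rho>\<close> by (simp add: field_simps)
  finally show ?thesis .
qed

theorem theorem1:
  fixes A B Hmin dH :: "real^'n^'n" and \<omega> \<delta> \<gamma> :: "real^'n"
  assumes "nonneg_mat A" and "nonneg_mat B" and "nonneg_mat Hmin" and "nonneg_mat dH"
    and "\<forall>i. 0 \<le> \<omega> $ i" and "\<forall>i. 0 \<le> \<delta> $ i" and "\<forall>i. 0 < \<gamma> $ i"
    and "irreducible_mat A" and "irreducible_mat B" and "irreducible_mat Hmin"
    and "transpose B = B"
  shows "spec_rad (matrix_inv (diagm \<gamma>)) * spec_rad B \<noteq> 0
    \<and> (\<forall>m op s x r v T. sirsvo_traj A B Hmin dH \<omega> \<delta> \<gamma> m op s x r v \<and> 0 \<le> T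
         \<and> (\<forall>t\<ge>T. \<forall>i. v t $ i > 1 - 1 / (spec_rad (matrix_inv (diagm \<gamma>)) * spec_rad B))
         \<longrightarrow> (\<forall>t\<ge>T. loc_asym_stable (\<lambda>y. diagm (s t) ** B *v y - diagm \<gamma> *v y) 0))"
proof -
  define \<rho>G where "\<rho>G = spec_rad (matrix_inv (diagm \<gamma>))"
  define \<rho>B where "\<rho>B = spec_rad B"
  have "0 < \<rho>B"
    unfolding \<rho>B_def using assms(9,11) by (intro spec_rad_pos_if_symmetric irreducible_mat_nonzero)
  have "0 < \<rho>G"
    using spec_rad_matrix_inv_diagm_ge[OF assms(7)] assms(7) unfolding \<rho>G_def
    by (meson less_le_trans zero_less_divide_1_iff)
  have "loc_asym_stable (\<lambda>y. diagm (s t) ** B *v y - diagm \<gamma> *v y) 0"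
    if "sirsvo_traj A B Hmin dH \<omega> \<delta> \<gamma> m op s x r v" "0 \<le> T" "T \<le> t"
      and "\<forall>t\<ge>T. \<forall>i. 1 - 1 / (\<rho>G * \<rho>B) < v t $ i"
    for m op s x r v T t
  proof (rule loc_asym_stable_diagm_mult_symmetric[OF assms(11)])
    have "0 \<le> s t $ i \<and> s t $ i < 1 / (\<rho>G * \<rho>B)" for i
      using sirsvo_traj_susceptible_less[OF that(1), of t "1 / (\<rho>G * \<rho>B)"] that(2-4) by auto
    then show "\<forall>i. 0 \<le> s t $ i" and "\<forall>i j. s t $ i * spec_rad B < \<gamma> $ j"
      using mult_less_if_below_threshold[OF assms(7) \<open>0 < \<rho>B\<close>] unfolding \<rho>G_def \<rho>B_def by auto
  qed
  moreover have "\<rho>G * \<rho>B \<noteq> 0"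
    using \<open>0 < \<rho>G\<close> \<open>0 < \<rho>B\<close> by simp
  ultimately show ?thesis
    unfolding \<rho>G_def \<rho>B_def by blast
qed

end
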